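(* Let $G=\{1,\dots,d\}^m$ and let $A\subseteq G$ satisfy $\mathsf{DAff}(A)=A$. If $\frac{|A|}{d^m}\ge\frac12$, then $$\dim\mathsf{Aff}(G)-\dim\mathsf{Aff}(A)\le 2d\,\frac{d^m-|A|}{d^m}.$$
   Context: For $z\in G$, $\sigma(z)\in\{0,1\}^{md}$ is the concatenation of the one-hot encodings of $z_1,\dots,z_m$. For $A\subseteq G$, $\mathsf{Aff}(A)\subseteq\mathbb{R}^{md}$ is the affine hull of $\{\sigma(z):z\in A\}$, and $\mathsf{DAff}(A)=\{z\in G:\sigma(z)\in\mathsf{Aff}(A)\}$ is the discrete affine hull. *)

theory Defs
  imports "HOL-Analysis.Analysis"
begin

text \<open>The grid G = [d]^m is rendered as the type of all functions 'm \<Rightarrow> 'd,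
  where 'm is a finite type with m = CARD('m) elements (coordinates) and
  'd is a finite type with d = CARD('d) elements (the alphabet {1..d}).\<close>

definition sigma :: "('m::finite \<Rightarrow> 'd::finite) \<Rightarrow> real ^ ('m \<times> 'd)" where
  "sigma z = (\<chi> p. if z (fst p) = snd p then 1 else 0)"

definition Aff :: "('m::finite \<Rightarrow> 'd::finite) set \<Rightarrow> (real ^ ('m \<times> 'd)) set" where
  "Aff A = affine hull (sigma ` A)"

definition DAff :: "('m::finite \<Rightarrow> 'd::finite) set \<Rightarrow> ('m \<Rightarrow> 'd) set" where
  "DAff A = {z. sigma z \<in> Aff A}"

end

theory Submission
  imports Defs
begin

(* Induction on the number k of free coordinates. Fix a free coordinate i and let t be the
   number of values z i takes on A. By pigeonhole the largest fibre A_b = {z : z i = b} has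
   M >= |A|/t >= N/2 points, where N = d^(k-1) is the size of its subgrid, so induction
   applies to A_b. One point from each of the other t - 1 fibres raises the affine dimension
   by t - 1, each being the only point with a 1 at the one-hot position (i, z i). Hence the
   deficit (d - 1) k - dim Aff(A) exceeds that of A_b by at most d - t <= 2 (d - t) M / N,
   and deficit(A) * N <= 2 d (N - M) + 2 (d - t) M <= 2 (d N - |A|).
   For k = m this is the claim, as dim Aff(G) <= (d - 1) m: each sigma z - sigma z0 is a sum
   of m differences of unit vectors. *)

lemma card_le_card_image_mult_fiber:
  assumes "finite A" "A \<noteq> {}"
  obtains b where "b \<in> f ` A" "card A \<le> card (f ` A) * card {x\<in>A. f x = b}"
proof -
  let ?n = "\<lambda>b. card {x\<in>A. f x = b}"
  have "Max (?n ` f ` A) \<in> ?n ` f ` A"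
    using assms by (intro Max_in) auto
  then obtain b where b: "Max (?n ` f ` A) = ?n b" "b \<in> f ` A"
    by (rule imageE)
  have max: "?n c \<le> ?n b" if "c \<in> f ` A" for c
    unfolding b(1)[symmetric] using assms that by (intro Max_ge) auto
  have "card A = (\<Sum>c\<in>f ` A. ?n c)"
    using sum.image_gen[OF assms(1), of "\<lambda>_. 1 :: nat" f] by simp
  also have "\<dots> \<le> card (f ` A) * ?n b"
    using sum_bounded_above[of "f ` A" ?n "?n b"] max by simp
  finally show thesis
    using that b(2) by blast
qed

lemma sigma_component [simp]: "sigma z $ p = (if z (fst p) = snd p then 1 else 0)"
  by (simp add: sigma_def)

lemma sigma_eq_sum_axis:
  fixes z :: "'m::finite \<Rightarrow> 'd::finite"
  shows "sigma z = (\<Sum>j\<in>UNIV. axis (j, z j) (1::real))"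
proof (rule vec_eq_iff[THEN iffD2, rule_format])
  fix p :: "'m \<times> 'd"
  have "(\<Sum>j\<in>UNIV. axis (j, z j) (1::real) $ p)
      = (\<Sum>j\<in>UNIV. if j = fst p then (if z (fst p) = snd p then 1 else 0) else 0)"
    by (rule sum.cong) (auto simp: axis_def)
  then show "sigma z $ p = (\<Sum>j\<in>UNIV. axis (j, z j) 1) $ p"
    by (simp add: sum_component)
qed

lemma aff_dim_sigma_UNIV_le:
  "aff_dim (range (sigma :: ('m::finite \<Rightarrow> 'd::finite) \<Rightarrow> _)) \<le> (int CARD('d) - 1) * int CARD('m)"
proof -
  fix z0 :: "'m \<Rightarrow> 'd"
  define D where "D = (SIGMA j:UNIV. UNIV - {z0 j})"
  define B where "B = (\<lambda>(j, c). axis (j, c) (1::real) - axis (j, z0 j) 1) ` D"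
  have "axis (j, z j) 1 - axis (j, z0 j) 1 \<in> span B" for z j
    by (cases "z j = z0 j") (auto simp: B_def D_def span_zero intro!: span_base)
  then have "sigma z - sigma z0 \<in> span B" for z
    by (simp add: sigma_eq_sum_axis flip: sum_subtractf) (intro span_sum)
  then have "(+) (- sigma z0) ` range sigma \<subseteq> span B"
    by auto
  then have "dim ((+) (- sigma z0) ` range sigma) \<le> card B"
    by (rule dim_le_card) (simp add: B_def D_def)
  also have "card B \<le> card D"
    unfolding B_def by (rule card_image_le) (simp add: D_def)
  also have "card D = (CARD('d) - 1) * CARD('m)"
    by (simp add: D_def card_Diff_singleton)
  also have "int ((CARD('d) - 1) * CARD('m)) = (int CARD('d) - 1) * int CARD('m)"
    using of_nat_diff[of 1 "CARD('d)"] by (simp add: Suc_le_eq)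
  finally show ?thesis
    by (subst aff_dim_eq_dim[of "sigma z0"]) (auto simp: hull_inc)
qed

lemma aff_dim_sigma_union_new_values:
  fixes S F :: "('m::finite \<Rightarrow> 'd::finite) set"
  assumes "finite F" "inj_on (\<lambda>w. w i) F" "\<forall>w\<in>F. \<forall>z\<in>S. w i \<noteq> z i"
  shows "aff_dim (sigma ` (S \<union> F)) = aff_dim (sigma ` S) + int (card F)"
  using assms
proof (induction F rule: finite_induct)
  case empty
  then show ?case by simp
next
  case (insert w F)
  let ?H = "{x :: real ^ ('m \<times> 'd). x $ (i, w i) = 0}"
  have "sigma ` (S \<union> F) \<subseteq> ?H"
    using insert by (auto simp: inj_on_def)
  moreover have "affine ?H"
    using affine_hyperplane[of "axis (i, w i) 1" 0] by (simp add: cart_eq_inner_axis inner_commute)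
  ultimately have "affine hull (sigma ` (S \<union> F)) \<subseteq> ?H"
    by (rule hull_minimal)
  then have "sigma w \<notin> affine hull (sigma ` (S \<union> F))"
    by auto
  moreover have "aff_dim (sigma ` (S \<union> F)) = aff_dim (sigma ` S) + int (card F)"
    using insert by simp
  moreover have "sigma ` (S \<union> insert w F) = insert (sigma w) (sigma ` (S \<union> F))"
    by blast
  ultimately show ?case
    using insert.hyps by (simp add: aff_dim_insert)
qed

lemma aff_dim_sigma_fiber:
  fixes A :: "('m::finite \<Rightarrow> 'd::finite) set"
  assumes "b \<in> (\<lambda>z. z i) ` A"
  shows "aff_dim (sigma ` {z\<in>A. z i = b}) + int (card ((\<lambda>z. z i) ` A)) - 1 \<le> aff_dim (sigma ` A)"
proof -
  let ?V = "(\<lambda>z. z i) ` A - {b}"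
  define R where "R = inv_into A (\<lambda>z. z i) ` ?V"
  have "R \<subseteq> A"
    unfolding R_def by (auto intro: inv_into_into)
  have values_R: "(\<lambda>z. z i) ` R = ?V"
    unfolding R_def by (rule image_inv_into_cancel) auto
  have card_R: "card R = card ?V"
    unfolding R_def by (rule card_image, rule inj_on_inv_into) auto
  have "aff_dim (sigma ` ({z\<in>A. z i = b} \<union> R)) = aff_dim (sigma ` {z\<in>A. z i = b}) + int (card R)"
  proof (rule aff_dim_sigma_union_new_values)
    show "inj_on (\<lambda>w. w i) R"
      using values_R card_R by (simp add: inj_on_iff_eq_card)
    show "\<forall>w\<in>R. \<forall>z\<in>{z\<in>A. z i = b}. w i \<noteq> z i"
      using values_R by blast
  qed simp
  also have "int (card R) = int (card ((\<lambda>z. z i) ` A)) - 1"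
  proof -
    have "(\<lambda>z. z i) ` A \<noteq> {}"
      using assms by blast
    then have "0 < card ((\<lambda>z. z i) ` A)"
      by (simp add: card_gt_0_iff)
    then show ?thesis
      using assms by (simp add: card_R card_Diff_singleton of_nat_diff)
  qed
  finally have "aff_dim (sigma ` ({z\<in>A. z i = b} \<union> R))
      = aff_dim (sigma ` {z\<in>A. z i = b}) + int (card ((\<lambda>z. z i) ` A)) - 1"
    by simp
  moreover have "aff_dim (sigma ` ({z\<in>A. z i = b} \<union> R)) \<le> aff_dim (sigma ` A)"
    using \<open>R \<subseteq> A\<close> by (intro aff_dim_subset image_mono) auto
  ultimately show ?thesis
    by linarith
qed

definition subgrid :: "'m set \<Rightarrow> ('m \<Rightarrow> 'd) \<Rightarrow> ('m \<Rightarrow> 'd) set" where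
  "subgrid I z0 = {z. \<forall>j. j \<notin> I \<longrightarrow> z j = z0 j}"

lemma aff_dim_sigma_lower_bound_subgrid:
  fixes A :: "('m::finite \<Rightarrow> 'd::finite) set"
  assumes "A \<subseteq> subgrid I z0" "real CARD('d) ^ card I \<le> 2 * real (card A)"
  shows "((real CARD('d) - 1) * real (card I) - aff_dim (sigma ` A)) * real CARD('d) ^ card I
         \<le> 2 * real CARD('d) * (real CARD('d) ^ card I - real (card A))"
  using finite[of I] assms
proof (induction I arbitrary: z0 A rule: finite_induct)
  case empty
  then have "A \<noteq> {}"
    by (cases "A = {}") auto
  moreover have "A \<subseteq> {z0}"
    using empty.prems(1) by (auto simp: subgrid_def)
  ultimately have "A = {z0}"
    by blast
  then show ?case
    by simp
next
  case (insert i I)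
  let ?d = "real CARD('d)" and ?N = "real CARD('d) ^ card I" and ?V = "(\<lambda>z. z i) ` A"
  have "0 < real CARD('d) ^ card (insert i I)"
    by simp
  with insert.prems(2) have "A \<noteq> {}"
    by (metis card.empty of_nat_0 mult_zero_right not_le)
  then obtain b where b: "b \<in> ?V" and fiber: "card A \<le> card ?V * card {z\<in>A. z i = b}"
    by (rule card_le_card_image_mult_fiber[OF finite])
  define Ab where "Ab = {z\<in>A. z i = b}"
  have V_le: "card ?V \<le> CARD('d)"
    by (rule card_mono) auto
  have "?d * ?N \<le> 2 * real (card A)"
    using insert.prems(2) insert.hyps by simp
  also have "\<dots> \<le> 2 * real (card ?V) * real (card Ab)"
    using fiber by (simp add: Ab_def flip: of_nat_mult)
  also have "\<dots> \<le> 2 * ?d * real (card Ab)"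
    using V_le by (simp add: mult_right_mono)
  finally have N_le: "?N \<le> 2 * real (card Ab)"
    by simp
  have "Ab \<subseteq> subgrid I (z0(i := b))"
    using insert.prems(1) insert.hyps by (auto simp: Ab_def subgrid_def)
  from insert.IH[OF this N_le]
  have IH: "((?d - 1) * card I - aff_dim (sigma ` Ab)) * ?N \<le> 2 * ?d * (?N - card Ab)" .
  have dim: "aff_dim (sigma ` Ab) + real (card ?V) - 1 \<le> aff_dim (sigma ` A)"
    using aff_dim_sigma_fiber[OF b] unfolding Ab_def by linarith
  have "(?d - 1) * card (insert i I) - aff_dim (sigma ` A)
      \<le> ((?d - 1) * card I - aff_dim (sigma ` Ab)) + (?d - card ?V)"
    using dim insert.hyps by (simp add: distrib_left)
  then have "((?d - 1) * card (insert i I) - aff_dim (sigma ` A)) * ?N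
      \<le> (((?d - 1) * card I - aff_dim (sigma ` Ab)) + (?d - card ?V)) * ?N"
    by (rule mult_right_mono) simp
  also have "\<dots> \<le> 2 * ?d * (?N - card Ab) + (?d - card ?V) * (2 * card Ab)"
    unfolding distrib_right using IH N_le V_le by (intro add_mono mult_left_mono) auto
  also have "\<dots> = 2 * (?d * ?N - card ?V * card Ab)"
    by (simp add: algebra_simps)
  also have "\<dots> \<le> 2 * (?d * ?N - card A)"
    using fiber by (simp add: Ab_def flip: of_nat_mult)
  finally have "?d * (((?d - 1) * card (insert i I) - aff_dim (sigma ` A)) * ?N)
      \<le> ?d * (2 * (?d * ?N - card A))"
    by (rule mult_left_mono) simp
  moreover have "real CARD('d) ^ card (insert i I) = ?d * ?N"
    using insert.hyps by simp
  ultimately show ?case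
    by (simp only: mult_ac)
qed

theorem lemma3:
  fixes A :: "('m::finite \<Rightarrow> 'd::finite) set"
  assumes "DAff A = A"
    and "real (card A) / real CARD('d) ^ CARD('m) \<ge> 1 / 2"
  shows "real_of_int (aff_dim (Aff (UNIV :: ('m \<Rightarrow> 'd) set))) - real_of_int (aff_dim (Aff A))
         \<le> 2 * real CARD('d) * ((real CARD('d) ^ CARD('m) - real (card A)) / real CARD('d) ^ CARD('m))"
proof -
  let ?d = "real CARD('d)" and ?N = "real CARD('d) ^ CARD('m)"
  have "A \<subseteq> subgrid UNIV undefined"
    by (simp add: subgrid_def)
  moreover have "?N \<le> 2 * real (card A)"
    using assms(2) by (simp add: field_simps)
  ultimately have lower: "((?d - 1) * CARD('m) - aff_dim (sigma ` A)) * ?N \<le> 2 * ?d * (?N - card A)"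
    using aff_dim_sigma_lower_bound_subgrid[of A UNIV] by simp
  have "real_of_int (aff_dim (range (sigma :: ('m \<Rightarrow> 'd) \<Rightarrow> _)))
      \<le> real_of_int ((int CARD('d) - 1) * int CARD('m))"
    using aff_dim_sigma_UNIV_le by (simp only: of_int_le_iff)
  then have "(aff_dim (range (sigma :: ('m \<Rightarrow> 'd) \<Rightarrow> _)) - aff_dim (sigma ` A)) * ?N
      \<le> ((?d - 1) * CARD('m) - aff_dim (sigma ` A)) * ?N"
    by (intro mult_right_mono) simp_all
  then have "(aff_dim (range (sigma :: ('m \<Rightarrow> 'd) \<Rightarrow> _)) - aff_dim (sigma ` A)) * ?N
      \<le> 2 * ?d * (?N - card A)"
    using lower by (rule order_trans)
  then show ?thesis
    unfolding Aff_def aff_dim_affine_hull by (simp add: pos_le_divide_eq)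
qed

end
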